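(* Let $n\ge 2$ and let $C_n=\{a_0<a_1<\cdots<a_{n-1}\}$ be a chain with $a_0=0$, $a_{n-1}=1$, with $\wedge=\min$ and $\vee=\max$. Let $\to$ be a binary operation on $C_n$. Then $\langle C_n,\vee,\wedge,\to,0,1\rangle$ is a semi-Heyting algebra if and only if all of the following hold: (i) $\{a_1,\dots,a_{n-1}\}$ is closed under $\to$ and $\langle\{a_1,\dots,a_{n-1}\},\vee,\wedge,\to,a_1,1\rangle$ is a semi-Heyting algebra; (ii) $0\to 0=1$; (iii) $a_i\to 0=0$ for all $1\le i\le n-1$; (iv) there exists $j\in\{0,1,\dots,n-1\}$ such that $0\to a_h=a_j$ for every $h$ with $j<h\le n-1$, and $0\to a_h\ge a_h$ for every $h$ with $1\le h\le j$. Consequently, for a fixed semi-Heyting operation on $\{a_1,\dots,a_{n-1}\}$, the number of ways to extend it to a semi-Heyting operation on $C_n$ equals $\sum_{i=0}^{n-1}\frac{(n-1)!}{i!}$.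
   Context: A semi-Heyting algebra is an algebra $\langle L,\vee,\wedge,\to,0,1\rangle$ such that: (SH1) $\langle L,\vee,\wedge,0,1\rangle$ is a bounded lattice with least element $0$ and greatest element $1$; (SH2) $x\wedge(x\to y)=x\wedge y$; (SH3) $x\wedge(y\to z)=x\wedge[(x\wedge y)\to(x\wedge z)]$; (SH4) $x\to x=1$, for all $x,y,z\in L$. *)

theory Defs
  imports Main
begin

text \<open>A finite chain a_0 < ... < a_(n-1) is represented by the indices 0, ..., n-1 of nat
  with their natural order; meet is min and join is max.\<close>

definition semi_heyting_chain :: "nat set \<Rightarrow> nat \<Rightarrow> nat \<Rightarrow> (nat \<Rightarrow> nat \<Rightarrow> nat) \<Rightarrow> bool" where
  "semi_heyting_chain S b t imp \<longleftrightarrow>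
     b \<in> S \<and> t \<in> S \<and> (\<forall>x\<in>S. b \<le> x \<and> x \<le> t) \<and>
     (\<forall>x\<in>S. \<forall>y\<in>S. imp x y \<in> S) \<and>
     (\<forall>x\<in>S. \<forall>y\<in>S. min x (imp x y) = min x y) \<and>
     (\<forall>x\<in>S. \<forall>y\<in>S. \<forall>z\<in>S. min x (imp y z) = min x (imp (min x y) (min x z))) \<and>
     (\<forall>x\<in>S. imp x x = t)"

end

theory Submission
  imports Defs "HOL-Library.FuncSet"
begin

text \<open>In a chain, SH2 with y = 0 forces a_i \<rightarrow> 0 = 0 for i \<ge> 1, SH4 gives 0 \<rightarrow> 0 = 1, and SH3 with
  nonzero arguments is SH3 of the upper part.  The only new constraint is SH3 with y = 0 and
  0 < x < z, which reads min x (0 \<rightarrow> z) = min x (0 \<rightarrow> x).  A row 0 \<rightarrow> (-) satisfies it iff it lies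
  above the diagonal up to some index j and is constantly a_j beyond it.  For fixed j the values
  0 \<rightarrow> a_h with 1 \<le> h \<le> j range freely over {a_h, ..., a_(n-1)}, giving (n-1)!/(n-1-j)! extensions.\<close>

lemma semi_heyting_chain_cong:
  assumes "\<forall>x\<in>S. \<forall>y\<in>S. imp x y = imp' x y" and "\<forall>x\<in>S. \<forall>y\<in>S. min x y \<in> S"
  shows "semi_heyting_chain S b t imp = semi_heyting_chain S b t imp'"
proof -
  have "imp (min x y) (min x z) = imp' (min x y) (min x z)" if "x \<in> S" "y \<in> S" "z \<in> S" for x y z
    using assms that by blast
  with assms(1) show ?thesis
    unfolding semi_heyting_chain_def by simp
qed

definition admissible_zero_row :: "nat \<Rightarrow> nat \<Rightarrow> (nat \<Rightarrow> nat) \<Rightarrow> bool" where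
  "admissible_zero_row n j f \<longleftrightarrow>
     j \<le> n - 1 \<and> (\<forall>h. j < h \<and> h \<le> n - 1 \<longrightarrow> f h = j) \<and> (\<forall>h. 1 \<le> h \<and> h \<le> j \<longrightarrow> f h \<ge> h)"

lemma admissible_zero_row_min_eq:
  assumes "admissible_zero_row n j f" and "1 \<le> x" "x < z" "z \<le> n - 1"
  shows "min x (f z) = min x (f x)"
proof -
  note row = assms(1)[unfolded admissible_zero_row_def]
  consider "z \<le> j" | "j < x" | "x \<le> j" "j < z" by linarith
  then show ?thesis
  proof cases
    case 1
    then have "f z \<ge> z" "f x \<ge> x" using row assms by auto
    then show ?thesis using assms by linarith
  next
    case 2
    then have "f z = j" "f x = j" using row assms by auto
    then show ?thesis by simp
  next
    case 3
    then have "f z = j" "f x \<ge> x" using row assms by auto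
    then show ?thesis using 3 by linarith
  qed
qed

lemma ex_admissible_zero_row:
  assumes "\<forall>x z. 1 \<le> x \<and> x < z \<and> z \<le> n - 1 \<longrightarrow> min x (f z) = min x (f x)"
  shows "\<exists>j. admissible_zero_row n j f"
proof -
  define P where "P j \<longleftrightarrow> j \<le> n - 1 \<and> (\<forall>h. 1 \<le> h \<and> h \<le> j \<longrightarrow> h \<le> f h)" for j
  have bounded: "\<And>k. P k \<Longrightarrow> k \<le> n - 1"
    unfolding P_def by auto
  define j where "j = (GREATEST j. P j)"
  have "P 0" unfolding P_def by auto
  then have Pj: "P j"
    unfolding j_def using GreatestI_nat bounded by blast
  have maximal: "\<And>k. P k \<Longrightarrow> k \<le> j"
    unfolding j_def using Greatest_le_nat bounded by blast
  show ?thesis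
  proof (cases "j = n - 1")
    case True
    with Pj show ?thesis
      unfolding P_def admissible_zero_row_def by auto
  next
    case False
    with Pj have "j < n - 1" unfolding P_def by auto
    have "\<not> P (Suc j)" using maximal by fastforce
    with \<open>j < n - 1\<close> Pj have below: "f (Suc j) < Suc j"
      unfolding P_def by (metis le_SucE not_less Suc_leI)
    have at_Suc: "f (Suc j) = j"
    proof (cases "j = 0")
      case False
      have "min j (f (Suc j)) = min j (f j)" using assms \<open>j < n - 1\<close> False by auto
      moreover have "f j \<ge> j" using Pj False unfolding P_def by auto
      ultimately show ?thesis using below by linarith
    qed (use below in simp)
    have "f h = j" if "j < h" "h \<le> n - 1" for h
    proof (cases "h = Suc j")
      case False
      then have "min (Suc j) (f h) = min (Suc j) (f (Suc j))" using assms that by auto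
      then show ?thesis using at_Suc by linarith
    qed (use at_Suc in simp)
    with Pj show ?thesis
      unfolding P_def admissible_zero_row_def by blast
  qed
qed

lemma semi_heyting_chain_remove_bottom:
  assumes "n \<ge> 2" and sh: "semi_heyting_chain {0..<n} 0 (n - 1) imp"
  shows "semi_heyting_chain {1..<n} 1 (n - 1) imp" and "imp 0 0 = n - 1"
    and "\<forall>i. 1 \<le> i \<and> i \<le> n - 1 \<longrightarrow> imp i 0 = 0"
    and "\<exists>j. admissible_zero_row n j (imp 0)"
proof -
  have closed: "\<And>x y. x < n \<Longrightarrow> y < n \<Longrightarrow> imp x y < n"
    and sh2: "\<And>x y. x < n \<Longrightarrow> y < n \<Longrightarrow> min x (imp x y) = min x y"
    and sh4: "\<And>x. x < n \<Longrightarrow> imp x x = n - 1"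
    using sh unfolding semi_heyting_chain_def by simp_all
  have sh3: "\<And>x y z. x < n \<Longrightarrow> y < n \<Longrightarrow> z < n \<Longrightarrow>
               min x (imp y z) = min x (imp (min x y) (min x z))"
    using sh unfolding semi_heyting_chain_def by (metis atLeastLessThan_iff le0)
  show "semi_heyting_chain {1..<n} 1 (n - 1) imp"
    unfolding semi_heyting_chain_def
  proof (intro conjI ballI)
    fix x y assume "x \<in> {1..<n}" "y \<in> {1..<n}"
    then show "imp x y \<in> {1..<n}"
      using sh2[of x y] closed[of x y] by (auto simp: min_def split: if_splits)
  next
    fix x y z assume "x \<in> {1..<n}" "y \<in> {1..<n}" "z \<in> {1..<n}"
    then show "min x (imp y z) = min x (imp (min x y) (min x z))"
      using sh3[of x y z] by simp
  qed (use assms(1) sh2 sh4 in auto)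
  show "imp 0 0 = n - 1" using sh4 assms(1) by simp
  have "imp i 0 = 0" if "1 \<le> i" "i \<le> n - 1" for i
  proof -
    have "min i (imp i 0) = 0" using sh2[of i 0] that assms(1) by simp
    with \<open>1 \<le> i\<close> show ?thesis by linarith
  qed
  then show "\<forall>i. 1 \<le> i \<and> i \<le> n - 1 \<longrightarrow> imp i 0 = 0" by blast
  have "min x (imp 0 z) = min x (imp 0 x)" if "1 \<le> x" "x < z" "z \<le> n - 1" for x z
    using sh3[of x 0 z] that by auto
  then show "\<exists>j. admissible_zero_row n j (imp 0)"
    by (intro ex_admissible_zero_row) blast
qed

lemma semi_heyting_chain_adjoin_bottom:
  assumes "n \<ge> 2" and closed: "\<forall>x<n. \<forall>y<n. imp x y < n"
    and upper: "semi_heyting_chain {1..<n} 1 (n - 1) imp"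
    and zero_zero: "imp 0 0 = n - 1"
    and column: "\<forall>i. 1 \<le> i \<and> i \<le> n - 1 \<longrightarrow> imp i 0 = 0"
    and row: "admissible_zero_row n j (imp 0)"
  shows "semi_heyting_chain {0..<n} 0 (n - 1) imp"
proof -
  have up3: "\<And>x y z. 1 \<le> x \<Longrightarrow> x < n \<Longrightarrow> 1 \<le> y \<Longrightarrow> y < n \<Longrightarrow> 1 \<le> z \<Longrightarrow> z < n \<Longrightarrow>
               min x (imp y z) = min x (imp (min x y) (min x z))"
    using upper unfolding semi_heyting_chain_def by (metis atLeastLessThan_iff)
  have up2: "\<And>x y. 1 \<le> x \<Longrightarrow> x < n \<Longrightarrow> 1 \<le> y \<Longrightarrow> y < n \<Longrightarrow> min x (imp x y) = min x y"
    and up4: "\<And>x. 1 \<le> x \<Longrightarrow> x < n \<Longrightarrow> imp x x = n - 1"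
    using upper unfolding semi_heyting_chain_def by simp_all
  have sh2: "min x (imp x y) = min x y" if "x < n" "y < n" for x y
    using that up2 column by (cases "x = 0"; cases "y = 0") auto
  have sh4: "imp x x = n - 1" if "x < n" for x
    using that zero_zero up4 by (cases "x = 0") auto
  have sh3: "min x (imp y z) = min x (imp (min x y) (min x z))" if "x < n" "y < n" "z < n" for x y z
  proof -
    consider "x = 0" | "y = 0" "z \<le> x" | "x \<noteq> 0" "y = 0" "x < z" | "x \<noteq> 0" "y \<noteq> 0" "z = 0"
      | "x \<noteq> 0" "y \<noteq> 0" "z \<noteq> 0"
      by linarith
    then show ?thesis
    proof cases
      case 3
      then have "min x (imp 0 z) = min x (imp 0 x)"
        using admissible_zero_row_min_eq[OF row] that by simp
      with 3 show ?thesis by simp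
    next
      case 4
      then show ?thesis using column that by (simp add: min_def)
    next
      case 5
      then show ?thesis using up3[of x y z] that by simp
    qed (auto simp: min_absorb2)
  qed
  show ?thesis
    unfolding semi_heyting_chain_def
  proof (intro conjI ballI)
    fix x y z assume "x \<in> {0..<n}" "y \<in> {0..<n}" "z \<in> {0..<n}"
    then show "min x (imp y z) = min x (imp (min x y) (min x z))"
      using sh3[of x y z] by simp
  qed (use assms(1) closed sh2 sh4 in auto)
qed

theorem semi_heyting_chain_bottom_iff:
  assumes "n \<ge> 2" and "\<forall>x<n. \<forall>y<n. imp x y < n"
  shows "semi_heyting_chain {0..<n} 0 (n - 1) imp \<longleftrightarrow>
           semi_heyting_chain {1..<n} 1 (n - 1) imp \<and> imp 0 0 = n - 1 \<and>
           (\<forall>i. 1 \<le> i \<and> i \<le> n - 1 \<longrightarrow> imp i 0 = 0) \<and> (\<exists>j. admissible_zero_row n j (imp 0))"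
  using semi_heyting_chain_remove_bottom[OF assms(1)] semi_heyting_chain_adjoin_bottom[OF assms]
  by blast

definition zero_rows :: "nat \<Rightarrow> nat \<Rightarrow> (nat \<Rightarrow> nat) set" where
  "zero_rows n j = {g. (\<forall>h. h \<notin> {1..<n} \<longrightarrow> g h = 0) \<and> admissible_zero_row n j g \<and> (\<forall>h\<in>{1..j}. g h < n)}"

definition zero_row_of_free_values :: "nat \<Rightarrow> nat \<Rightarrow> (nat \<Rightarrow> nat) \<Rightarrow> nat \<Rightarrow> nat" where
  "zero_row_of_free_values n j g h = (if 1 \<le> h \<and> h \<le> j then g h else if j < h \<and> h < n then j else 0)"

lemma zero_rows_eq_image:
  assumes "j < n"
  shows "zero_rows n j = zero_row_of_free_values n j ` (\<Pi>\<^sub>E h\<in>{1..j}. {h..<n})"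
proof
  show "zero_rows n j \<subseteq> zero_row_of_free_values n j ` (\<Pi>\<^sub>E h\<in>{1..j}. {h..<n})"
  proof
    fix g assume g: "g \<in> zero_rows n j"
    then have "g = zero_row_of_free_values n j (restrict g {1..j})"
      using assms by (intro ext) (auto simp: zero_rows_def admissible_zero_row_def zero_row_of_free_values_def)
    moreover have "restrict g {1..j} \<in> (\<Pi>\<^sub>E h\<in>{1..j}. {h..<n})"
      using g by (auto simp: zero_rows_def admissible_zero_row_def)
    ultimately show "g \<in> zero_row_of_free_values n j ` (\<Pi>\<^sub>E h\<in>{1..j}. {h..<n})" by blast
  qed
qed (use assms in \<open>auto simp: zero_rows_def admissible_zero_row_def zero_row_of_free_values_def\<close>)

lemma inj_on_zero_row_of_free_values:
  "inj_on (zero_row_of_free_values n j) (\<Pi>\<^sub>E h\<in>{1..j}. {h..<n})"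
proof (rule inj_onI)
  fix g g' assume "g \<in> (\<Pi>\<^sub>E h\<in>{1..j}. {h..<n})" "g' \<in> (\<Pi>\<^sub>E h\<in>{1..j}. {h..<n})"
    and eq: "zero_row_of_free_values n j g = zero_row_of_free_values n j g'"
  have "g h = g' h" if "h \<in> {1..j}" for h
    using fun_cong[OF eq, of h] that by (simp add: zero_row_of_free_values_def)
  with PiE_ext show "g = g'"
    using \<open>g \<in> _\<close> \<open>g' \<in> _\<close> by blast
qed

lemma prod_diff_mult_fact:
  "j \<le> n - 1 \<Longrightarrow> (\<Prod>h\<in>{1..j}. n - h) * fact (n - 1 - j) = (fact (n - 1) :: nat)"
proof (induction j)
  case (Suc j)
  have "n - 1 - j = Suc (n - 1 - Suc j)" using Suc.prems by linarith
  then have "fact (n - 1 - j) = (n - Suc j) * (fact (n - 1 - Suc j) :: nat)"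
    by simp
  then show ?case
    using Suc by (simp add: mult.assoc)
qed simp

lemma card_zero_rows:
  assumes "j < n"
  shows "card (zero_rows n j) = fact (n - 1) div fact (n - Suc j)"
proof -
  have "card (zero_rows n j) = card (\<Pi>\<^sub>E h\<in>{1..j}. {h..<n})"
    using zero_rows_eq_image[OF assms] card_image[OF inj_on_zero_row_of_free_values] by metis
  also have "\<dots> = (\<Prod>h\<in>{1..j}. n - h)"
    by (simp add: card_PiE)
  also have "\<dots> = fact (n - 1) div fact (n - 1 - j)"
  proof -
    have "(\<Prod>h\<in>{1..j}. n - h) * fact (n - 1 - j) = (fact (n - 1) :: nat)"
      using prod_diff_mult_fact[of j n] assms by simp
    then show ?thesis
      by (metis fact_nonzero nonzero_mult_div_cancel_right)
  qed
  finally show ?thesis by simp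
qed

lemma zero_rows_disjoint:
  assumes "j < k" "k < n"
  shows "zero_rows n j \<inter> zero_rows n k = {}"
proof -
  have "g (Suc j) = j" "g (Suc j) \<ge> Suc j" if "g \<in> zero_rows n j" "g \<in> zero_rows n k" for g
    using that assms unfolding zero_rows_def admissible_zero_row_def
    by (auto dest!: spec[of _ "Suc j"])
  then show ?thesis by fastforce
qed

lemma card_UN_zero_rows:
  "card (\<Union>j<n. zero_rows n j) = (\<Sum>i<n. fact (n - 1) div fact i)"
proof -
  have "card (\<Union>j<n. zero_rows n j) = (\<Sum>j<n. card (zero_rows n j))"
  proof (rule card_UN_disjoint)
    show "\<forall>j\<in>{..<n}. finite (zero_rows n j)"
      by (simp add: zero_rows_eq_image finite_PiE)
    show "\<forall>j\<in>{..<n}. \<forall>k\<in>{..<n}. j \<noteq> k \<longrightarrow> zero_rows n j \<inter> zero_rows n k = {}"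
      using zero_rows_disjoint by (metis inf_commute lessThan_iff linorder_neqE_nat)
  qed simp
  also have "\<dots> = (\<Sum>j<n. fact (n - 1) div fact (n - Suc j))"
    by (simp add: card_zero_rows)
  also have "\<dots> = (\<Sum>i<n. fact (n - 1) div fact i)"
    by (rule sum.nat_diff_reindex)
  finally show ?thesis .
qed

definition extend_imp :: "nat \<Rightarrow> (nat \<Rightarrow> nat \<Rightarrow> nat) \<Rightarrow> (nat \<Rightarrow> nat) \<Rightarrow> nat \<Rightarrow> nat \<Rightarrow> nat" where
  "extend_imp n imp' g x y =
     (if x < n \<and> y < n then
        if x = 0 then (if y = 0 then n - 1 else g y) else if y = 0 then 0 else imp' x y
      else 0)"

lemma inj_on_extend_imp: "inj_on (extend_imp n imp') (\<Union>j<n. zero_rows n j)"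
proof (rule inj_onI)
  fix g g' assume "g \<in> (\<Union>j<n. zero_rows n j)" "g' \<in> (\<Union>j<n. zero_rows n j)"
    and eq: "extend_imp n imp' g = extend_imp n imp' g'"
  show "g = g'"
  proof
    fix h
    show "g h = g' h"
    proof (cases "h \<in> {1..<n}")
      case True
      then show ?thesis
        using fun_cong[OF fun_cong[OF eq, of 0], of h] by (simp add: extend_imp_def)
    next
      case False
      then show ?thesis
        using \<open>g \<in> _\<close> \<open>g' \<in> _\<close> by (auto simp: zero_rows_def)
    qed
  qed
qed

lemma semi_heyting_chain_eq_extend_imp:
  assumes n: "n \<ge> 2" and sh: "semi_heyting_chain {0..<n} 0 (n - 1) imp"
    and zero: "\<forall>x y. \<not> (x < n \<and> y < n) \<longrightarrow> imp x y = 0"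
    and agree: "\<forall>x\<in>{1..<n}. \<forall>y\<in>{1..<n}. imp x y = imp' x y"
  shows "\<exists>g\<in>(\<Union>j<n. zero_rows n j). imp = extend_imp n imp' g"
proof -
  have closed: "\<forall>x<n. \<forall>y<n. imp x y < n"
    using sh unfolding semi_heyting_chain_def by simp
  obtain j where row: "admissible_zero_row n j (imp 0)"
    using semi_heyting_chain_remove_bottom(4)[OF n sh] ..
  define g where "g h = (if h \<in> {1..<n} then imp 0 h else 0)" for h
  have "g \<in> zero_rows n j" "j < n"
    using row closed n by (auto simp: g_def zero_rows_def admissible_zero_row_def)
  moreover have "imp = extend_imp n imp' g"
    using zero agree semi_heyting_chain_remove_bottom(2,3)[OF n sh]
    by (intro ext) (auto simp: extend_imp_def g_def)
  ultimately show ?thesis by blast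
qed

lemma semi_heyting_chain_extend_imp:
  assumes n: "n \<ge> 2" and upper: "semi_heyting_chain {1..<n} 1 (n - 1) imp'"
    and "j < n" and g: "g \<in> zero_rows n j"
  shows "semi_heyting_chain {0..<n} 0 (n - 1) (extend_imp n imp' g)"
proof -
  let ?imp = "extend_imp n imp' g"
  have agree: "\<forall>x\<in>{1..<n}. \<forall>y\<in>{1..<n}. ?imp x y = imp' x y"
    by (auto simp: extend_imp_def)
  have "g y < n" if "1 \<le> y" "y < n" for y
    using g \<open>j < n\<close> that by (cases "y \<le> j") (auto simp: zero_rows_def admissible_zero_row_def)
  moreover have "imp' x y < n" if "1 \<le> x" "x < n" "1 \<le> y" "y < n" for x y
    using upper that unfolding semi_heyting_chain_def by (metis atLeastLessThan_iff)
  ultimately have closed: "\<forall>x<n. \<forall>y<n. ?imp x y < n"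
    unfolding extend_imp_def using n by auto
  have "\<forall>x\<in>{1..<n}. \<forall>y\<in>{1..<n}. min x y \<in> {1..<n}" by auto
  then have "semi_heyting_chain {1..<n} 1 (n - 1) ?imp"
    using semi_heyting_chain_cong[OF agree] upper by simp
  moreover have "?imp 0 0 = n - 1" "\<forall>i. 1 \<le> i \<and> i \<le> n - 1 \<longrightarrow> ?imp i 0 = 0"
    using n by (auto simp: extend_imp_def)
  moreover have "admissible_zero_row n j (?imp 0)"
    using g n by (auto simp: extend_imp_def zero_rows_def admissible_zero_row_def)
  ultimately show ?thesis
    by (rule semi_heyting_chain_adjoin_bottom[OF n closed])
qed

lemma semi_heyting_extensions_eq_image:
  assumes "n \<ge> 2" and "semi_heyting_chain {1..<n} 1 (n - 1) imp'"
  shows "{imp. (\<forall>x y. \<not> (x < n \<and> y < n) \<longrightarrow> imp x y = 0) \<and>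
                semi_heyting_chain {0..<n} 0 (n - 1) imp \<and>
                (\<forall>x\<in>{1..<n}. \<forall>y\<in>{1..<n}. imp x y = imp' x y)}
         = extend_imp n imp' ` (\<Union>j<n. zero_rows n j)"
    (is "?S = ?T")
proof
  show "?S \<subseteq> ?T"
  proof
    fix imp assume "imp \<in> ?S"
    then have "\<exists>g\<in>(\<Union>j<n. zero_rows n j). imp = extend_imp n imp' g"
      by (intro semi_heyting_chain_eq_extend_imp[OF assms(1)]) simp_all
    then show "imp \<in> ?T" by (auto intro: rev_image_eqI)
  qed
  show "?T \<subseteq> ?S"
  proof
    fix imp assume "imp \<in> ?T"
    then obtain j g where "j < n" "g \<in> zero_rows n j" and imp: "imp = extend_imp n imp' g"
      by blast
    then have "semi_heyting_chain {0..<n} 0 (n - 1) imp"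
      using semi_heyting_chain_extend_imp[OF assms] by simp
    moreover have "\<forall>x y. \<not> (x < n \<and> y < n) \<longrightarrow> imp x y = 0"
      and "\<forall>x\<in>{1..<n}. \<forall>y\<in>{1..<n}. imp x y = imp' x y"
      by (auto simp: imp extend_imp_def)
    ultimately show "imp \<in> ?S" by simp
  qed
qed

theorem mainTheorem2:
  fixes n :: nat
  assumes "n \<ge> 2"
  shows
   "(\<forall>imp :: nat \<Rightarrow> nat \<Rightarrow> nat.
       (\<forall>x<n. \<forall>y<n. imp x y < n) \<longrightarrow>
       (semi_heyting_chain {0..<n} 0 (n - 1) imp \<longleftrightarrow>
          semi_heyting_chain {1..<n} 1 (n - 1) imp \<and>
          imp 0 0 = n - 1 \<and>
          (\<forall>i. 1 \<le> i \<and> i \<le> n - 1 \<longrightarrow> imp i 0 = 0) \<and>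
          (\<exists>j\<le>n - 1. (\<forall>h. j < h \<and> h \<le> n - 1 \<longrightarrow> imp 0 h = j) \<and>
                      (\<forall>h. 1 \<le> h \<and> h \<le> j \<longrightarrow> imp 0 h \<ge> h))))
    \<and>
    (\<forall>imp' :: nat \<Rightarrow> nat \<Rightarrow> nat.
       semi_heyting_chain {1..<n} 1 (n - 1) imp' \<longrightarrow>
       card {imp :: nat \<Rightarrow> nat \<Rightarrow> nat.
               (\<forall>x y. \<not> (x < n \<and> y < n) \<longrightarrow> imp x y = 0) \<and>
               semi_heyting_chain {0..<n} 0 (n - 1) imp \<and>
               (\<forall>x\<in>{1..<n}. \<forall>y\<in>{1..<n}. imp x y = imp' x y)}
         = (\<Sum>i<n. fact (n - 1) div fact i))"
proof (intro conjI allI impI, goal_cases)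
  case (1 imp)
  with semi_heyting_chain_bottom_iff[OF assms] show ?case
    unfolding admissible_zero_row_def by blast
next
  case (2 imp')
  then show ?case
    by (simp only: semi_heyting_extensions_eq_image[OF assms] card_image[OF inj_on_extend_imp]
        card_UN_zero_rows)
qed

end
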